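(* Let $\alpha\in(0,\infty)$ and let $X_1,X_2,\ldots$ be i.i.d. random variables with $\Pr(X_i=0)=\Pr(X_i=\alpha)=1/2$. Let $\mu_\alpha$ be the distribution of the random continued fraction $[1,X_1,1,X_2,1,X_3,\ldots]$. If $\mu_\alpha$ is absolutely continuous with respect to Lebesgue measure with a density in $L^2$, then $\alpha\le \sqrt6/2-1$.
   Context: The continued fraction $[1,x_1,1,x_2,\ldots]=\cfrac{1}{1+\cfrac{1}{x_1+\cfrac{1}{1+\cfrac{1}{x_2+\cdots}}}}$ is defined as $\lim_{n\to\infty}T_{x_1}\circ\cdots\circ T_{x_n}(0)$ with $T_a(x):=\frac{x+a}{1+x+a}$; the limit exists by monotonicity in each $x_i$. *)

theory Defs
  imports "HOL-Probability.Probability"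
begin

definition cfT :: "real \<Rightarrow> real \<Rightarrow> real" where
  "cfT a x = (x + a) / (1 + x + a)"

text \<open>Finite approximant T_{x_1} o ... o T_{x_n} (0) (sequence indexed from 0).\<close>
definition cf_approx :: "(nat \<Rightarrow> real) \<Rightarrow> nat \<Rightarrow> real" where
  "cf_approx xs n = foldr (\<lambda>i. cfT (xs i)) [0..<n] 0"

text \<open>The continued fraction [1,x_1,1,x_2,...] as the limit of the approximants.\<close>
definition cf :: "(nat \<Rightarrow> real) \<Rightarrow> real" where
  "cf xs = lim (\<lambda>n. cf_approx xs n)"

definition mu :: "real \<Rightarrow> real measure" where
  "mu \<alpha> = distr (Pi\<^sub>M UNIV (\<lambda>_::nat. measure_pmf (pmf_of_set {0, \<alpha>}))) borel cf"

end

theory Submission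
  imports Defs
begin

text \<open>
  Write \<open>T\<^sub>a\<close> for \<open>cfT a\<close>. The law of the continued fraction is self-similar,
  \<open>2 \<mu> = T\<^sub>0 \<mu> + T\<^sub>\<alpha> \<mu>\<close>, so its density \<open>f\<close> (which lives on \<open>[0,1]\<close>) satisfies
  \<open>2 f = g\<^sub>0 + g\<^sub>\<alpha>\<close> almost everywhere, where \<open>g\<^sub>a\<close> is the density of the image of \<open>f\<close> under \<open>T\<^sub>a\<close>.
  Integrating against the weight \<open>\<rho>(u) = u\<^sup>2/2 + u/\<surd>6 + 1/2 - 1/\<surd>6\<close>, positivity of the \<open>g\<^sub>a\<close>
  gives \<open>4 \<integral> f\<^sup>2 \<rho> \<ge> \<integral> g\<^sub>0\<^sup>2 \<rho> + \<integral> g\<^sub>\<alpha>\<^sup>2 \<rho>\<close>, and substituting \<open>y = T\<^sub>a u\<close> turns the right-hand side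
  into \<open>\<integral> f(u)\<^sup>2 ((1+u)\<^sup>2 \<rho>(T\<^sub>0 u) + (1+u+\<alpha>)\<^sup>2 \<rho>(T\<^sub>\<alpha> u)) du\<close>. The weight is chosen so that the
  bracket is exactly \<open>4 \<rho>(u)\<close> for \<open>\<alpha> = \<surd>6/2 - 1\<close>; for larger \<open>\<alpha>\<close> it exceeds \<open>4 \<rho>(u)\<close> by a
  positive constant, which is impossible because \<open>\<integral> f\<^sup>2\<close> over \<open>[0,1]\<close> is finite and positive.
\<close>

lemma (in sequence_space) nn_integral_PiM_case_nat:
  assumes [measurable]: "f \<in> borel_measurable S"
  shows "(\<integral>\<^sup>+\<omega>. f \<omega> \<partial>S) = (\<integral>\<^sup>+s. \<integral>\<^sup>+\<omega>. f (case_nat s \<omega>) \<partial>S \<partial>M)"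
proof -
  have "(\<lambda>(s, \<omega>). f (case_nat s \<omega>)) \<in> borel_measurable (M \<Otimes>\<^sub>M S)"
    by measurable
  note iterated = nn_integral_fst[OF this, symmetric]
  have "(\<integral>\<^sup>+\<omega>. f \<omega> \<partial>S) = integral\<^sup>N (M \<Otimes>\<^sub>M S) (\<lambda>(s, \<omega>). f (case_nat s \<omega>))"
    by (subst PiM_iter[symmetric]) (simp add: nn_integral_distr split_beta')
  then show ?thesis
    unfolding iterated by simp
qed

lemma AE_PiM_pmf_set:
  "AE \<omega> in Pi\<^sub>M UNIV (\<lambda>_::nat. measure_pmf p). \<forall>i. \<omega> i \<in> set_pmf p"
proof -
  interpret sequence_space "measure_pmf p" ..
  have "AE \<omega> in S. \<omega> i \<in> set_pmf p" for i
    by (rule AE_component) (simp_all add: AE_measure_pmf)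
  then show ?thesis
    by (simp add: AE_all_countable)
qed

lemma nn_integral_power2_indicator_less_top:
  assumes "integrable M (\<lambda>x. (f x)\<^sup>2)"
  shows "(\<integral>\<^sup>+x. ennreal ((f x)\<^sup>2) * indicator A x \<partial>M) < \<infinity>"
proof -
  have "(\<integral>\<^sup>+x. ennreal ((f x)\<^sup>2) * indicator A x \<partial>M) \<le> (\<integral>\<^sup>+x. ennreal ((f x)\<^sup>2) \<partial>M)"
    by (intro nn_integral_mono) (simp add: indicator_def)
  also have "\<dots> < \<infinity>"
    using assms by (simp add: integrable_iff_bounded)
  finally show ?thesis .
qed

lemma nn_integral_power2_indicator_neq_0:
  assumes [measurable]: "f \<in> borel_measurable M" "A \<in> sets M"
    and "(\<integral>\<^sup>+x. ennreal (f x) * indicator A x \<partial>M) \<noteq> 0"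
  shows "(\<integral>\<^sup>+x. ennreal ((f x)\<^sup>2) * indicator A x \<partial>M) \<noteq> 0"
proof
  assume "(\<integral>\<^sup>+x. ennreal ((f x)\<^sup>2) * indicator A x \<partial>M) = 0"
  then have "AE x in M. ennreal ((f x)\<^sup>2) * indicator A x = 0"
    by (subst (asm) nn_integral_0_iff_AE) simp_all
  then have "AE x in M. ennreal (f x) * indicator A x = 0"
    by eventually_elim auto
  then have "(\<integral>\<^sup>+x. ennreal (f x) * indicator A x \<partial>M) = 0"
    by (subst nn_integral_0_iff_AE) simp_all
  with assms(3) show False ..
qed

lemma cfT_nonneg: "0 \<le> a \<Longrightarrow> 0 \<le> x \<Longrightarrow> 0 \<le> cfT a x"
  by (simp add: cfT_def)

lemma cfT_less_one: "0 \<le> a \<Longrightarrow> 0 \<le> x \<Longrightarrow> cfT a x < 1"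
  by (simp add: cfT_def)

lemma cfT_mono: "0 \<le> a \<Longrightarrow> 0 \<le> x \<Longrightarrow> x \<le> y \<Longrightarrow> cfT a x \<le> cfT a y"
  by (auto simp: cfT_def field_simps)

lemma measurable_cfT [measurable]: "cfT a \<in> borel_measurable borel"
  unfolding cfT_def by measurable

lemma foldr_cfT_nonneg:
  "(\<And>i. 0 \<le> xs i) \<Longrightarrow> 0 \<le> y \<Longrightarrow> 0 \<le> foldr (\<lambda>i. cfT (xs i)) l y"
  by (induction l) (simp_all add: cfT_nonneg)

lemma foldr_cfT_le_one:
  "(\<And>i. 0 \<le> xs i) \<Longrightarrow> 0 \<le> y \<Longrightarrow> y \<le> 1 \<Longrightarrow> foldr (\<lambda>i. cfT (xs i)) l y \<le> 1"
  by (induction l) (simp_all add: foldr_cfT_nonneg cfT_less_one less_imp_le)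

lemma foldr_cfT_mono:
  "(\<And>i. 0 \<le> xs i) \<Longrightarrow> 0 \<le> y \<Longrightarrow> y \<le> z \<Longrightarrow>
    foldr (\<lambda>i. cfT (xs i)) l y \<le> foldr (\<lambda>i. cfT (xs i)) l z"
  by (induction l) (simp_all add: foldr_cfT_nonneg cfT_mono)

lemma cf_approx_in_unit: "(\<And>i. 0 \<le> xs i) \<Longrightarrow> cf_approx xs n \<in> {0..1}"
  by (simp add: cf_approx_def foldr_cfT_nonneg foldr_cfT_le_one)

lemma incseq_cf_approx:
  assumes "\<And>i. 0 \<le> xs i"
  shows "incseq (cf_approx xs)"
proof (rule incseq_SucI)
  fix n
  have "cf_approx xs (Suc n) = foldr (\<lambda>i. cfT (xs i)) [0..<n] (cfT (xs n) 0)"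
    by (simp add: cf_approx_def)
  then show "cf_approx xs n \<le> cf_approx xs (Suc n)"
    unfolding cf_approx_def using assms by (simp add: foldr_cfT_mono cfT_nonneg)
qed

lemma cf_approx_LIMSEQ:
  assumes "\<And>i. 0 \<le> xs i"
  shows "cf_approx xs \<longlonglongrightarrow> cf xs"
proof -
  have "\<forall>n. cf_approx xs n \<le> 1"
    using cf_approx_in_unit[of xs, OF assms] by simp
  then obtain L where L: "cf_approx xs \<longlonglongrightarrow> L"
    by (rule incseq_convergent[OF incseq_cf_approx[of xs, OF assms]])
  moreover from L have "cf xs = L"
    unfolding cf_def by (rule limI)
  ultimately show ?thesis
    by simp
qed

lemma cf_in_unit:
  assumes "\<And>i. 0 \<le> xs i"
  shows "cf xs \<in> {0..1}"
proof (rule closed_sequentially[OF closed_atLeastAtMost])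
  show "cf_approx xs n \<in> {0..1}" for n
    using cf_approx_in_unit[of xs, OF assms] .
  show "cf_approx xs \<longlonglongrightarrow> cf xs"
    using cf_approx_LIMSEQ[of xs, OF assms] .
qed

lemma cf_approx_case_nat_Suc:
  "cf_approx (case_nat s xs) (Suc n) = cfT s (cf_approx xs n)"
  unfolding cf_approx_def
  by (simp add: upt_conv_Cons map_Suc_upt[symmetric] foldr_map o_def del: upt_Suc)

lemma cf_case_nat:
  assumes "\<And>i. 0 \<le> xs i" "0 \<le> s"
  shows "cf (case_nat s xs) = cfT s (cf xs)"
proof (rule LIMSEQ_unique)
  have "\<And>i. 0 \<le> case_nat s xs i"
    using assms by (simp split: nat.split)
  then show "cf_approx (case_nat s xs) \<longlonglongrightarrow> cf (case_nat s xs)"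
    by (rule cf_approx_LIMSEQ)
  have "(\<lambda>n. cfT s (cf_approx xs n)) \<longlonglongrightarrow> cfT s (cf xs)"
    unfolding cfT_def using cf_approx_LIMSEQ[of xs] cf_in_unit[of xs] assms
    by (intro tendsto_intros) auto
  then have "(\<lambda>n. cf_approx (case_nat s xs) (Suc n)) \<longlonglongrightarrow> cfT s (cf xs)"
    by (simp add: cf_approx_case_nat_Suc)
  then show "cf_approx (case_nat s xs) \<longlonglongrightarrow> cfT s (cf xs)"
    by (rule LIMSEQ_imp_Suc)
qed

definition cf_law :: "real pmf \<Rightarrow> real measure" where
  "cf_law p = distr (Pi\<^sub>M UNIV (\<lambda>_::nat. measure_pmf p)) borel cf"

lemma mu_eq_cf_law: "mu \<alpha> = cf_law (pmf_of_set {0, \<alpha>})"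
  unfolding mu_def cf_law_def ..

lemma measurable_component_pmf [measurable]:
  "(\<lambda>xs. xs i) \<in> borel_measurable (Pi\<^sub>M UNIV (\<lambda>_::nat. measure_pmf (p :: real pmf)))"
proof (rule measurable_compose)
  show "(\<lambda>xs. xs i) \<in> measurable (Pi\<^sub>M UNIV (\<lambda>_::nat. measure_pmf p)) (measure_pmf p)"
    by (rule measurable_component_singleton) simp
qed simp

lemma measurable_cf [measurable]: "cf \<in> borel_measurable (Pi\<^sub>M UNIV (\<lambda>_::nat. measure_pmf (p :: real pmf)))"
proof -
  have "(\<lambda>xs. foldr (\<lambda>i. cfT (xs i)) l 0) \<in> borel_measurable (Pi\<^sub>M UNIV (\<lambda>_::nat. measure_pmf p))" for l
    by (induction l) (simp_all add: cfT_def)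
  then show ?thesis
    unfolding cf_def cf_approx_def by (rule borel_measurable_lim_metric)
qed

lemma prob_space_cf_law: "prob_space (cf_law p)"
proof -
  interpret sequence_space "measure_pmf p" ..
  show ?thesis
    unfolding cf_law_def by (rule prob_space.prob_space_distr[OF prob_space_axioms]) simp
qed

lemma AE_cf_law_in_unit:
  assumes "set_pmf p \<subseteq> {0..}"
  shows "AE y in cf_law p. y \<in> {0..1}"
  unfolding cf_law_def
proof (subst AE_distr_iff)
  show "AE \<omega> in Pi\<^sub>M UNIV (\<lambda>_. measure_pmf p). cf \<omega> \<in> {0..1}"
    using AE_PiM_pmf_set[of p]
  proof eventually_elim
    case (elim \<omega>)
    then have "0 \<le> \<omega> i" for i
      using assms by auto
    then show ?case
      by (rule cf_in_unit)
  qed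
qed simp_all

lemma nn_integral_cf_law:
  assumes "set_pmf p \<subseteq> {0..}" and [measurable]: "g \<in> borel_measurable borel"
  shows "(\<integral>\<^sup>+y. g y \<partial>cf_law p) = (\<integral>\<^sup>+s. \<integral>\<^sup>+y. g (cfT s y) \<partial>cf_law p \<partial>measure_pmf p)"
proof -
  interpret sequence_space "measure_pmf p" ..
  have "(\<integral>\<^sup>+y. g y \<partial>cf_law p) = (\<integral>\<^sup>+\<omega>. g (cf \<omega>) \<partial>S)"
    unfolding cf_law_def by (simp add: nn_integral_distr)
  also have "\<dots> = (\<integral>\<^sup>+s. \<integral>\<^sup>+\<omega>. g (cf (case_nat s \<omega>)) \<partial>S \<partial>measure_pmf p)"
    by (rule nn_integral_PiM_case_nat) simp
  also have "\<dots> = (\<integral>\<^sup>+s. \<integral>\<^sup>+\<omega>. g (cfT s (cf \<omega>)) \<partial>S \<partial>measure_pmf p)"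
  proof (intro nn_integral_cong_AE)
    show "AE s in measure_pmf p. (\<integral>\<^sup>+\<omega>. g (cf (case_nat s \<omega>)) \<partial>S) = (\<integral>\<^sup>+\<omega>. g (cfT s (cf \<omega>)) \<partial>S)"
      using AE_measure_pmf[of p]
    proof eventually_elim
      case (elim s)
      then have "0 \<le> s"
        using assms(1) by auto
      show ?case
        using AE_PiM_pmf_set[of p]
      proof (intro nn_integral_cong_AE, eventually_elim)
        case (elim \<omega>)
        then have "0 \<le> \<omega> i" for i
          using assms(1) by auto
        then show ?case
          using \<open>0 \<le> s\<close> by (simp add: cf_case_nat)
      qed
    qed
  qed
  also have "\<dots> = (\<integral>\<^sup>+s. \<integral>\<^sup>+y. g (cfT s y) \<partial>cf_law p \<partial>measure_pmf p)"
    unfolding cf_law_def by (simp add: nn_integral_distr)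
  finally show ?thesis .
qed

lemma nn_integral_mu_selfsimilar:
  assumes "0 < \<alpha>" and "g \<in> borel_measurable borel"
  shows "2 * (\<integral>\<^sup>+y. g y \<partial>mu \<alpha>) = (\<integral>\<^sup>+y. g (cfT 0 y) \<partial>mu \<alpha>) + (\<integral>\<^sup>+y. g (cfT \<alpha> y) \<partial>mu \<alpha>)"
proof -
  have "2 * (c / 2) = c" for c :: ennreal
    by (simp add: ennreal_times_divide mult.commute[of 2] mult_divide_eq_ennreal)
  then show ?thesis
    using assms unfolding mu_eq_cf_law by (subst nn_integral_cf_law) (auto simp: nn_integral_pmf_of_set)
qed

definition cfT_inv :: "real \<Rightarrow> real \<Rightarrow> real" where
  "cfT_inv a y = y / (1 - y) - a"

definition push_density :: "real \<Rightarrow> (real \<Rightarrow> real) \<Rightarrow> real \<Rightarrow> real" where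
  "push_density a f y = f (cfT_inv a y) / (1 - y)\<^sup>2 * indicator {cfT a 0..cfT a 1} y"

lemma cfT_inv_cfT: "0 \<le> a \<Longrightarrow> 0 \<le> u \<Longrightarrow> cfT_inv a (cfT a u) = u"
  by (simp add: cfT_inv_def cfT_def field_simps)

lemma one_minus_cfT: "0 \<le> a \<Longrightarrow> 0 \<le> u \<Longrightarrow> 1 - cfT a u = 1 / (1 + u + a)"
  by (simp add: cfT_def field_simps)

lemma cfT_has_real_derivative:
  assumes "0 \<le> a" "0 \<le> u"
  shows "(cfT a has_real_derivative 1 / (1 + u + a)\<^sup>2) (at u)"
proof -
  have "((\<lambda>x. (x + a) / (1 + x + a)) has_real_derivative
      (1 * (1 + u + a) - (u + a) * 1) / ((1 + u + a) * (1 + u + a))) (at u)"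
    using assms by (intro derivative_eq_intros) auto
  then show ?thesis
    by (simp add: cfT_def[abs_def] power2_eq_square)
qed

lemma nn_integral_cfT_substitution:
  fixes h :: "real \<Rightarrow> ennreal"
  assumes "0 \<le> a" and "h \<in> borel_measurable borel"
  shows "(\<integral>\<^sup>+y. h y * indicator {cfT a 0..cfT a 1} y \<partial>lborel) =
         (\<integral>\<^sup>+u. h (cfT a u) * ennreal (1 / (1 + u + a)\<^sup>2) * indicator {0..1} u \<partial>lborel)"
proof (rule nn_integral_substitution_aux[OF assms(2)])
  show "(cfT a has_real_derivative 1 / (1 + u + a)\<^sup>2) (at u)" if "u \<in> {0..1}" for u
    using cfT_has_real_derivative assms(1) that by simp
  show "continuous_on {0..1} (\<lambda>u. 1 / (1 + u + a)\<^sup>2)"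
    using assms(1) by (intro continuous_intros) auto
qed (use assms(1) in auto)

lemma push_density_nonneg: "(\<And>x. 0 \<le> f x) \<Longrightarrow> 0 \<le> push_density a f y"
  by (simp add: push_density_def)

lemma push_density_eq_0_outside: "0 \<le> a \<Longrightarrow> y \<notin> {0..1} \<Longrightarrow> push_density a f y = 0"
  using cfT_nonneg[of a 0] cfT_less_one[of a 1] by (auto simp: push_density_def)

lemma measurable_push_density [measurable]:
  assumes [measurable]: "f \<in> borel_measurable borel"
  shows "push_density a f \<in> borel_measurable borel"
  unfolding push_density_def[abs_def] cfT_inv_def by measurable

lemma nn_integral_push_density:
  assumes "0 \<le> a" and [measurable]: "f \<in> borel_measurable borel" "k \<in> borel_measurable borel"
  shows "(\<integral>\<^sup>+y. ennreal (push_density a f y) * k y \<partial>lborel) =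
         (\<integral>\<^sup>+u. ennreal (f u) * k (cfT a u) * indicator {0..1} u \<partial>lborel)"
proof -
  define h where "h y = ennreal (f (cfT_inv a y) / (1 - y)\<^sup>2) * k y" for y
  have [measurable]: "h \<in> borel_measurable borel"
    unfolding h_def cfT_inv_def by measurable
  have "(\<integral>\<^sup>+y. ennreal (push_density a f y) * k y \<partial>lborel) =
      (\<integral>\<^sup>+y. h y * indicator {cfT a 0..cfT a 1} y \<partial>lborel)"
    by (intro nn_integral_cong) (simp add: h_def push_density_def indicator_def)
  also have "\<dots> = (\<integral>\<^sup>+u. h (cfT a u) * ennreal (1 / (1 + u + a)\<^sup>2) * indicator {0..1} u \<partial>lborel)"
    using assms(1) by (rule nn_integral_cfT_substitution) simp
  also have "\<dots> = (\<integral>\<^sup>+u. ennreal (f u) * k (cfT a u) * indicator {0..1} u \<partial>lborel)"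
  proof (intro nn_integral_cong)
    fix u :: real
    show "h (cfT a u) * ennreal (1 / (1 + u + a)\<^sup>2) * indicator {0..1} u =
        ennreal (f u) * k (cfT a u) * indicator {0..1} u"
    proof (cases "u \<in> {0..1}")
      case True
      have "h (cfT a u) * ennreal (1 / (1 + u + a)\<^sup>2) =
          ennreal (f (cfT_inv a (cfT a u)) / (1 - cfT a u)\<^sup>2) * ennreal (1 / (1 + u + a)\<^sup>2) * k (cfT a u)"
        unfolding h_def by (simp only: mult_ac)
      also have "ennreal (f (cfT_inv a (cfT a u)) / (1 - cfT a u)\<^sup>2) * ennreal (1 / (1 + u + a)\<^sup>2) =
          ennreal (f (cfT_inv a (cfT a u)) / (1 - cfT a u)\<^sup>2 * (1 / (1 + u + a)\<^sup>2))"
        by (rule ennreal_mult''[symmetric]) simp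
      also have "f (cfT_inv a (cfT a u)) / (1 - cfT a u)\<^sup>2 * (1 / (1 + u + a)\<^sup>2) = f u"
        using True assms(1) by (simp add: cfT_inv_cfT one_minus_cfT power_divide)
      finally show ?thesis
        by simp
    qed simp
  qed
  finally show ?thesis .
qed

lemma nn_integral_push_density_sq:
  assumes "0 \<le> a" and [measurable]: "f \<in> borel_measurable borel" "w \<in> borel_measurable borel"
  shows "(\<integral>\<^sup>+y. ennreal ((push_density a f y)\<^sup>2 * w y) \<partial>lborel) =
         (\<integral>\<^sup>+u. ennreal ((f u)\<^sup>2 * ((1 + u + a)\<^sup>2 * w (cfT a u))) * indicator {0..1} u \<partial>lborel)"
proof -
  define h where "h y = ennreal ((f (cfT_inv a y) / (1 - y)\<^sup>2)\<^sup>2 * w y)" for y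
  have [measurable]: "h \<in> borel_measurable borel"
    unfolding h_def cfT_inv_def by measurable
  have "(\<integral>\<^sup>+y. ennreal ((push_density a f y)\<^sup>2 * w y) \<partial>lborel) =
      (\<integral>\<^sup>+y. h y * indicator {cfT a 0..cfT a 1} y \<partial>lborel)"
    by (intro nn_integral_cong) (simp add: h_def push_density_def indicator_def)
  also have "\<dots> = (\<integral>\<^sup>+u. h (cfT a u) * ennreal (1 / (1 + u + a)\<^sup>2) * indicator {0..1} u \<partial>lborel)"
    using assms(1) by (rule nn_integral_cfT_substitution) simp
  also have "\<dots> = (\<integral>\<^sup>+u. ennreal ((f u)\<^sup>2 * ((1 + u + a)\<^sup>2 * w (cfT a u))) * indicator {0..1} u \<partial>lborel)"
  proof (intro nn_integral_cong)
    fix u :: real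
    show "h (cfT a u) * ennreal (1 / (1 + u + a)\<^sup>2) * indicator {0..1} u =
        ennreal ((f u)\<^sup>2 * ((1 + u + a)\<^sup>2 * w (cfT a u))) * indicator {0..1} u"
    proof (cases "u \<in> {0..1}")
      case True
      have "h (cfT a u) * ennreal (1 / (1 + u + a)\<^sup>2) =
          ennreal ((f (cfT_inv a (cfT a u)) / (1 - cfT a u)\<^sup>2)\<^sup>2 * w (cfT a u) * (1 / (1 + u + a)\<^sup>2))"
        unfolding h_def by (rule ennreal_mult''[symmetric]) simp
      also have "(f (cfT_inv a (cfT a u)) / (1 - cfT a u)\<^sup>2)\<^sup>2 * w (cfT a u) * (1 / (1 + u + a)\<^sup>2) =
          (f u)\<^sup>2 * ((1 + u + a)\<^sup>2 * w (cfT a u))"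
        using True assms(1) by (simp add: cfT_inv_cfT one_minus_cfT field_simps)
      finally show ?thesis
        by simp
    qed simp
  qed
  finally show ?thesis .
qed

lemma mu_density_supported:
  assumes "0 \<le> \<alpha>" and [measurable]: "f \<in> borel_measurable borel"
    and "mu \<alpha> = density lborel (\<lambda>x. ennreal (f x))"
  shows "AE u in lborel. 0 < f u \<longrightarrow> u \<in> {0..1}"
proof -
  have "AE u in mu \<alpha>. u \<in> {0..1}"
    unfolding mu_eq_cf_law using assms(1) by (intro AE_cf_law_in_unit) auto
  then have "AE u in lborel. 0 < ennreal (f u) \<longrightarrow> u \<in> {0..1}"
    unfolding assms(3) by (rule AE_density[THEN iffD1, rotated]) simp
  then show ?thesis
    by eventually_elim simp
qed

lemma mu_density_mass_in_unit:
  assumes "0 \<le> \<alpha>" and [measurable]: "f \<in> borel_measurable borel"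
    and mu: "mu \<alpha> = density lborel (\<lambda>x. ennreal (f x))"
  shows "(\<integral>\<^sup>+y. ennreal (f y) * indicator {0..1} y \<partial>lborel) = 1"
proof -
  have "emeasure (mu \<alpha>) {0..1} = 1"
    unfolding mu_eq_cf_law using assms(1)
    by (intro prob_space.emeasure_eq_1_AE prob_space_cf_law AE_cf_law_in_unit) (auto simp: cf_law_def)
  then show ?thesis
    unfolding mu by (simp add: emeasure_density)
qed

lemma mu_density_image_cfT:
  assumes "0 \<le> \<alpha>" "0 \<le> a" and [measurable]: "f \<in> borel_measurable borel" "A \<in> sets borel"
    and f_nonneg: "\<And>x. 0 \<le> f x" and mu: "mu \<alpha> = density lborel (\<lambda>x. ennreal (f x))"
  shows "(\<integral>\<^sup>+y. indicator A (cfT a y) \<partial>mu \<alpha>) = (\<integral>\<^sup>+y\<in>A. ennreal (push_density a f y) \<partial>lborel)"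
proof -
  have "(\<integral>\<^sup>+y. indicator A (cfT a y) \<partial>mu \<alpha>) = (\<integral>\<^sup>+u. ennreal (f u) * indicator A (cfT a u) \<partial>lborel)"
    unfolding mu by (simp add: nn_integral_density)
  also have "\<dots> = (\<integral>\<^sup>+u. ennreal (f u) * indicator A (cfT a u) * indicator {0..1} u \<partial>lborel)"
    using mu_density_supported[OF assms(1,3) mu]
  proof (intro nn_integral_cong_AE, eventually_elim)
    case (elim u)
    then show ?case
      using f_nonneg[of u] by (cases "u \<in> {0..1}") auto
  qed
  also have "\<dots> = (\<integral>\<^sup>+y\<in>A. ennreal (push_density a f y) \<partial>lborel)"
    using assms(2) by (subst nn_integral_push_density) simp_all
  finally show ?thesis .
qed

lemma mu_density_selfsimilar:
  assumes "0 < \<alpha>" and [measurable]: "f \<in> borel_measurable borel" and f_nonneg: "\<And>x. 0 \<le> f x"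
    and mu: "mu \<alpha> = density lborel (\<lambda>x. ennreal (f x))"
  shows "AE y in lborel. 2 * f y = push_density 0 f y + push_density \<alpha> f y"
proof -
  have "AE y in lborel. ennreal (2 * f y) = ennreal (push_density 0 f y + push_density \<alpha> f y)"
  proof (rule sigma_finite_measure.density_unique2[OF sigma_finite_lborel])
    fix A :: "real set"
    assume "A \<in> sets lborel"
    then have [measurable]: "A \<in> sets borel"
      by simp
    have "(\<integral>\<^sup>+y\<in>A. ennreal (2 * f y) \<partial>lborel) = 2 * (\<integral>\<^sup>+y. indicator A y \<partial>mu \<alpha>)"
      unfolding mu using f_nonneg
      by (simp add: emeasure_density ennreal_mult nn_integral_cmult mult.assoc)
    also have "\<dots> = (\<integral>\<^sup>+y\<in>A. ennreal (push_density 0 f y) \<partial>lborel) + (\<integral>\<^sup>+y\<in>A. ennreal (push_density \<alpha> f y) \<partial>lborel)"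
      using nn_integral_mu_selfsimilar[OF assms(1), of "indicator A"] assms(1)
        mu_density_image_cfT[OF _ _ _ _ f_nonneg mu, where a = 0 and A = A]
        mu_density_image_cfT[OF _ _ _ _ f_nonneg mu, where a = \<alpha> and A = A]
      by simp
    also have "\<dots> = (\<integral>\<^sup>+y\<in>A. ennreal (push_density 0 f y + push_density \<alpha> f y) \<partial>lborel)"
      using f_nonneg
      by (simp add: nn_integral_add[symmetric] push_density_nonneg distrib_right)
    finally show "(\<integral>\<^sup>+y\<in>A. ennreal (2 * f y) \<partial>lborel) =
        (\<integral>\<^sup>+y\<in>A. ennreal (push_density 0 f y + push_density \<alpha> f y) \<partial>lborel)" .
  qed simp_all
  then show ?thesis
    by eventually_elim (simp add: f_nonneg push_density_nonneg del: ennreal_plus)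
qed

definition rho :: "real \<Rightarrow> real" where
  "rho u = u\<^sup>2 / 2 + u / sqrt 6 + (1 / 2 - 1 / sqrt 6)"

lemma measurable_rho [measurable]: "rho \<in> borel_measurable borel"
  unfolding rho_def by measurable

lemma inverse_sqrt6_bounds: "1 / 3 < 1 / sqrt 6" "1 / sqrt 6 < (1 / 2 :: real)"
proof -
  have "2 < sqrt 6" "sqrt 6 < 3"
    by (simp_all add: real_less_rsqrt real_less_lsqrt)
  then show "1 / 3 < 1 / sqrt 6" "1 / sqrt 6 < (1 / 2 :: real)"
    by (simp_all add: divide_simps)
qed

lemma rho_nonneg: "0 \<le> u \<Longrightarrow> 0 \<le> rho u"
  using inverse_sqrt6_bounds by (simp add: rho_def)

lemma rho_le_one: "0 \<le> u \<Longrightarrow> u \<le> 1 \<Longrightarrow> rho u \<le> 1"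
proof -
  assume "0 \<le> u" "u \<le> 1"
  then have "u\<^sup>2 \<le> 1" "u / sqrt 6 \<le> 1 / sqrt 6"
    by (simp_all add: power_le_one divide_right_mono)
  then show "rho u \<le> 1"
    by (simp add: rho_def)
qed

lemma rho_transfer_gain:
  assumes "sqrt 6 / 2 - 1 < \<alpha>" "0 \<le> u"
  shows "4 * rho u + (\<alpha> - (sqrt 6 / 2 - 1)) / 2 \<le>
    (1 + u)\<^sup>2 * rho (cfT 0 u) + (1 + u + \<alpha>)\<^sup>2 * rho (cfT \<alpha> u)"
proof -
  define c :: real where "c = 1 / sqrt 6"
  define \<beta> where "\<beta> = 3 * c - 1"
  have c2: "c\<^sup>2 = 1 / 6"
    by (simp add: c_def power_divide)
  have c_bounds: "1 / 3 < c" "c < 1 / 2"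
    using inverse_sqrt6_bounds by (simp_all add: c_def)
  have "sqrt 6 / 2 = 3 * c"
    unfolding c_def by (simp add: field_simps flip: power2_eq_square)
  then have \<beta>: "sqrt 6 / 2 - 1 = \<beta>"
    by (simp add: \<beta>_def)
  define P where "P a = (u + a)\<^sup>2 / 2 + c * (u + a) * (1 + u + a) + (1 / 2 - c) * (1 + u + a)\<^sup>2" for a
  have rho_c: "rho x = x\<^sup>2 / 2 + c * x + (1 / 2 - c)" for x
    by (simp add: rho_def c_def)
  have weight: "(1 + u + a)\<^sup>2 * rho (cfT a u) = P a" if "0 \<le> a" for a
  proof -
    have "(1 + u + a) * cfT a u = u + a"
      using that assms(2) by (simp add: cfT_def add_ac)
    moreover have "(1 + u + a)\<^sup>2 * rho (cfT a u) = ((1 + u + a) * cfT a u)\<^sup>2 / 2 +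
        c * ((1 + u + a) * cfT a u) * (1 + u + a) + (1 / 2 - c) * (1 + u + a)\<^sup>2"
      by (simp add: rho_c algebra_simps power2_eq_square)
    ultimately show ?thesis
      by (simp add: P_def)
  qed
  have "0 \<le> \<alpha>"
    using assms c_bounds unfolding \<beta> \<beta>_def by linarith
  then have weights: "(1 + u)\<^sup>2 * rho (cfT 0 u) = P 0" "(1 + u + \<alpha>)\<^sup>2 * rho (cfT \<alpha> u) = P \<alpha>"
    using weight[of 0] weight[of \<alpha>] by simp_all
  \<comment> \<open>\<open>\<rho>\<close> is chosen so that \<open>P 0 + P \<beta> = 4 * rho u\<close>; what remains is the growth of \<open>P\<close> in \<open>a\<close>\<close>
  have "P 0 + P \<alpha> - 4 * rho u - (\<alpha> - \<beta>) / 2 = (\<alpha> - \<beta>) * (\<alpha> + \<beta> + 2 * u + 1 / 2 - c)"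
    using c2 by (simp add: P_def rho_c \<beta>_def field_simps power2_eq_square)
  moreover have "0 < (\<alpha> - \<beta>) * (\<alpha> + \<beta> + 2 * u + 1 / 2 - c)"
    using assms c_bounds unfolding \<beta> \<beta>_def by (intro mult_pos_pos) linarith+
  ultimately show ?thesis
    unfolding \<beta> weights by linarith
qed

lemma nn_integral_push_density_sq_le:
  assumes "0 \<le> \<alpha>" and [measurable]: "f \<in> borel_measurable borel" "w \<in> borel_measurable borel"
    and f_nonneg: "\<And>x. 0 \<le> f x" and w_nonneg: "\<And>y. y \<in> {0..1} \<Longrightarrow> 0 \<le> w y"
    and eq: "AE y in lborel. 2 * f y = push_density 0 f y + push_density \<alpha> f y"
  shows "(\<integral>\<^sup>+y. ennreal ((push_density 0 f y)\<^sup>2 * w y) \<partial>lborel) +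
      (\<integral>\<^sup>+y. ennreal ((push_density \<alpha> f y)\<^sup>2 * w y) \<partial>lborel) \<le>
    4 * (\<integral>\<^sup>+y. ennreal ((f y)\<^sup>2 * w y) * indicator {0..1} y \<partial>lborel)"
proof -
  let ?g0 = "push_density 0 f" and ?g\<alpha> = "push_density \<alpha> f"
  have "(\<integral>\<^sup>+y. ennreal ((?g0 y)\<^sup>2 * w y) \<partial>lborel) + (\<integral>\<^sup>+y. ennreal ((?g\<alpha> y)\<^sup>2 * w y) \<partial>lborel) =
      (\<integral>\<^sup>+y. ennreal ((?g0 y)\<^sup>2 * w y) + ennreal ((?g\<alpha> y)\<^sup>2 * w y) \<partial>lborel)"
    by (simp add: nn_integral_add)
  also have "\<dots> \<le> (\<integral>\<^sup>+y. 4 * (ennreal ((f y)\<^sup>2 * w y) * indicator {0..1} y) \<partial>lborel)"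
    using eq
  proof (intro nn_integral_mono_AE, eventually_elim)
    case (elim y)
    show ?case
    proof (cases "y \<in> {0..1}")
      case True
      have "(?g0 y)\<^sup>2 + (?g\<alpha> y)\<^sup>2 \<le> (2 * f y)\<^sup>2"
        unfolding elim using push_density_nonneg[of f 0 y] push_density_nonneg[of f \<alpha> y] f_nonneg
        by (simp add: power2_sum)
      then have "((?g0 y)\<^sup>2 + (?g\<alpha> y)\<^sup>2) * w y \<le> (2 * f y)\<^sup>2 * w y"
        using True w_nonneg[of y] by (intro mult_right_mono) auto
      then have "(?g0 y)\<^sup>2 * w y + (?g\<alpha> y)\<^sup>2 * w y \<le> 4 * ((f y)\<^sup>2 * w y)"
        by (simp add: distrib_right power_mult_distrib)
      have "ennreal ((?g0 y)\<^sup>2 * w y) + ennreal ((?g\<alpha> y)\<^sup>2 * w y) = ennreal ((?g0 y)\<^sup>2 * w y + (?g\<alpha> y)\<^sup>2 * w y)"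
        using True w_nonneg[of y] by simp
      also have "\<dots> \<le> ennreal (4 * ((f y)\<^sup>2 * w y))"
        by (rule ennreal_leI) fact
      also have "\<dots> = 4 * ennreal ((f y)\<^sup>2 * w y)"
        by (simp add: ennreal_mult')
      finally show ?thesis
        using True by simp
    qed (use assms(1) push_density_eq_0_outside in simp)
  qed
  also have "\<dots> = 4 * (\<integral>\<^sup>+y. ennreal ((f y)\<^sup>2 * w y) * indicator {0..1} y \<partial>lborel)"
    by (simp add: nn_integral_cmult)
  finally show ?thesis .
qed

lemma nn_integral_rho_transfer_gain:
  assumes "sqrt 6 / 2 - 1 < \<alpha>" and [measurable]: "f \<in> borel_measurable borel"
  shows "4 * (\<integral>\<^sup>+u. ennreal ((f u)\<^sup>2 * rho u) * indicator {0..1} u \<partial>lborel) +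
      ennreal ((\<alpha> - (sqrt 6 / 2 - 1)) / 2) * (\<integral>\<^sup>+u. ennreal ((f u)\<^sup>2) * indicator {0..1} u \<partial>lborel) \<le>
    (\<integral>\<^sup>+u. ennreal ((f u)\<^sup>2 * ((1 + u)\<^sup>2 * rho (cfT 0 u))) * indicator {0..1} u \<partial>lborel) +
    (\<integral>\<^sup>+u. ennreal ((f u)\<^sup>2 * ((1 + u + \<alpha>)\<^sup>2 * rho (cfT \<alpha> u))) * indicator {0..1} u \<partial>lborel)"
proof -
  define d where "d = (\<alpha> - (sqrt 6 / 2 - 1)) / 2"
  define W where "W a u = (1 + u + a)\<^sup>2 * rho (cfT a u)" for a u
  have "0 < d"
    using assms(1) by (simp add: d_def)
  have "0 < \<alpha>"
    using assms(1) inverse_sqrt6_bounds by (simp add: field_simps)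
  have pointwise: "4 * ennreal ((f u)\<^sup>2 * rho u) + ennreal d * ennreal ((f u)\<^sup>2) \<le>
      ennreal ((f u)\<^sup>2 * W 0 u) + ennreal ((f u)\<^sup>2 * W \<alpha> u)" if "u \<in> {0..1}" for u
  proof -
    have "0 \<le> W 0 u" "0 \<le> W \<alpha> u"
      using that \<open>0 < \<alpha>\<close> by (simp_all add: W_def rho_nonneg cfT_nonneg)
    have "4 * ennreal ((f u)\<^sup>2 * rho u) + ennreal d * ennreal ((f u)\<^sup>2) =
        ennreal (4 * ((f u)\<^sup>2 * rho u)) + ennreal (d * (f u)\<^sup>2)"
      using \<open>0 < d\<close> by (simp add: ennreal_mult')
    also have "\<dots> = ennreal ((f u)\<^sup>2 * (4 * rho u + d))"
      using that \<open>0 < d\<close> rho_nonneg[of u] by (simp add: algebra_simps flip: ennreal_plus)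
    also have "\<dots> \<le> ennreal ((f u)\<^sup>2 * W 0 u + (f u)\<^sup>2 * W \<alpha> u)"
      using rho_transfer_gain[OF assms(1), of u] that
      by (intro ennreal_leI) (simp add: distrib_left[symmetric] mult_left_mono d_def W_def)
    also have "\<dots> = ennreal ((f u)\<^sup>2 * W 0 u) + ennreal ((f u)\<^sup>2 * W \<alpha> u)"
      using \<open>0 \<le> W 0 u\<close> \<open>0 \<le> W \<alpha> u\<close> by simp
    finally show ?thesis .
  qed
  have "4 * (\<integral>\<^sup>+u. ennreal ((f u)\<^sup>2 * rho u) * indicator {0..1} u \<partial>lborel) +
      ennreal d * (\<integral>\<^sup>+u. ennreal ((f u)\<^sup>2) * indicator {0..1} u \<partial>lborel) =
      (\<integral>\<^sup>+u. (4 * ennreal ((f u)\<^sup>2 * rho u) + ennreal d * ennreal ((f u)\<^sup>2)) * indicator {0..1} u \<partial>lborel)"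
    by (simp add: nn_integral_add nn_integral_cmult distrib_right mult.assoc)
  also have "\<dots> \<le> (\<integral>\<^sup>+u. (ennreal ((f u)\<^sup>2 * W 0 u) + ennreal ((f u)\<^sup>2 * W \<alpha> u)) * indicator {0..1} u \<partial>lborel)"
    using pointwise by (intro nn_integral_mono) (simp add: indicator_def)
  also have "\<dots> = (\<integral>\<^sup>+u. ennreal ((f u)\<^sup>2 * W 0 u) * indicator {0..1} u \<partial>lborel) +
      (\<integral>\<^sup>+u. ennreal ((f u)\<^sup>2 * W \<alpha> u) * indicator {0..1} u \<partial>lborel)"
    unfolding W_def by (simp add: nn_integral_add distrib_right)
  finally show ?thesis
    by (simp add: d_def W_def)
qed

lemma selfsimilar_L2_density_bound:
  assumes "0 \<le> \<alpha>" and [measurable]: "f \<in> borel_measurable borel" and f_nonneg: "\<And>x. 0 \<le> f x"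
    and eq: "AE y in lborel. 2 * f y = push_density 0 f y + push_density \<alpha> f y"
    and finite: "(\<integral>\<^sup>+y. ennreal ((f y)\<^sup>2) * indicator {0..1} y \<partial>lborel) < \<infinity>"
    and nonzero: "(\<integral>\<^sup>+y. ennreal ((f y)\<^sup>2) * indicator {0..1} y \<partial>lborel) \<noteq> 0"
  shows "\<alpha> \<le> sqrt 6 / 2 - 1"
proof (rule ccontr)
  assume "\<not> \<alpha> \<le> sqrt 6 / 2 - 1"
  define d where "d = (\<alpha> - (sqrt 6 / 2 - 1)) / 2"
  define I where "I = (\<integral>\<^sup>+y. ennreal ((f y)\<^sup>2 * rho y) * indicator {0..1} y \<partial>lborel)"
  define J where "J = (\<integral>\<^sup>+y. ennreal ((f y)\<^sup>2) * indicator {0..1} y \<partial>lborel)"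
  have "I \<le> J"
    unfolding I_def J_def
    by (intro nn_integral_mono) (auto simp: indicator_def rho_le_one mult_left_le ennreal_leI)
  then have "4 * I \<noteq> \<infinity>"
    using finite by (simp add: J_def ennreal_mult_eq_top_iff top_unique)
  have "4 * I + ennreal d * J \<le>
      (\<integral>\<^sup>+u. ennreal ((f u)\<^sup>2 * ((1 + u + 0)\<^sup>2 * rho (cfT 0 u))) * indicator {0..1} u \<partial>lborel) +
      (\<integral>\<^sup>+u. ennreal ((f u)\<^sup>2 * ((1 + u + \<alpha>)\<^sup>2 * rho (cfT \<alpha> u))) * indicator {0..1} u \<partial>lborel)"
    using nn_integral_rho_transfer_gain[of \<alpha> f] \<open>\<not> \<alpha> \<le> sqrt 6 / 2 - 1\<close>
    unfolding I_def J_def d_def by simp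
  also have "\<dots> = (\<integral>\<^sup>+y. ennreal ((push_density 0 f y)\<^sup>2 * rho y) \<partial>lborel) +
      (\<integral>\<^sup>+y. ennreal ((push_density \<alpha> f y)\<^sup>2 * rho y) \<partial>lborel)"
    using assms(1) by (simp only: nn_integral_push_density_sq measurable_rho assms(2) order_refl)
  also have "\<dots> \<le> 4 * I"
    unfolding I_def using assms(1) f_nonneg eq
    by (intro nn_integral_push_density_sq_le) (simp_all add: rho_nonneg)
  finally have "4 * I + ennreal d * J \<le> 4 * I + 0"
    by simp
  then have "ennreal d * J = 0"
    using \<open>4 * I \<noteq> \<infinity>\<close> by (simp add: ennreal_add_left_cancel_le)
  then show False
    using \<open>\<not> \<alpha> \<le> sqrt 6 / 2 - 1\<close> nonzero by (simp add: J_def d_def)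
qed

theorem proposition3p1:
  fixes \<alpha> :: real
  assumes "\<alpha> > 0"
    and "\<exists>f :: real \<Rightarrow> real. f \<in> borel_measurable borel \<and> (\<forall>x. 0 \<le> f x) \<and>
           mu \<alpha> = density lborel (\<lambda>x. ennreal (f x)) \<and>
           integrable lborel (\<lambda>x. (f x)\<^sup>2)"
  shows "\<alpha> \<le> sqrt 6 / 2 - 1"
proof -
  obtain f :: "real \<Rightarrow> real" where [measurable]: "f \<in> borel_measurable borel"
    and f_nonneg: "\<And>x. 0 \<le> f x" and mu: "mu \<alpha> = density lborel (\<lambda>x. ennreal (f x))"
    and L2: "integrable lborel (\<lambda>x. (f x)\<^sup>2)"
    using assms(2) by blast
  have "(\<integral>\<^sup>+y. ennreal ((f y)\<^sup>2) * indicator {0..1} y \<partial>lborel) \<noteq> 0"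
    using mu_density_mass_in_unit[OF _ _ mu] assms(1) by (intro nn_integral_power2_indicator_neq_0) simp_all
  moreover have "(\<integral>\<^sup>+y. ennreal ((f y)\<^sup>2) * indicator {0..1} y \<partial>lborel) < \<infinity>"
    using L2 by (rule nn_integral_power2_indicator_less_top)
  moreover have "AE y in lborel. 2 * f y = push_density 0 f y + push_density \<alpha> f y"
    using assms(1) f_nonneg mu by (intro mu_density_selfsimilar) simp_all
  ultimately show ?thesis
    using assms(1) f_nonneg by (intro selfsimilar_L2_density_bound) simp_all
qed

end
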